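(* If $R \in \mathcal{R}$, then (1) $R \subseteq \mathcal{N}$, and (2) $R$ contains every $\lambda$-variable.
   Context: With disjoint sets of $\lambda$-variables $x,y,\dots$ and $\mu$-variables $a,b,\dots$, terms and $\mathcal{E}$-terms are $\mathcal{T} ::= x \mid \lambda x.\mathcal{T} \mid (\mathcal{T}\;\mathcal{E}) \mid \langle \mathcal{T},\mathcal{T}\rangle \mid \omega_1\mathcal{T} \mid \omega_2\mathcal{T} \mid \mu a.\mathcal{T} \mid (a\;\mathcal{T})$, $\mathcal{E} ::= \mathcal{T} \mid \pi_1 \mid \pi_2 \mid [x.\mathcal{T}, y.\mathcal{T}]$ (up to renaming of bound variables). The one-step reduction $\triangleright$ is the closure under all constructors of: $(\lambda x.u\;v)\triangleright u[x:=v]$; $(\langle t_1,t_2\rangle\;\pi_i)\triangleright t_i$; $(\omega_i t\;[x_1.u_1,x_2.u_2])\triangleright u_i[x_i:=t]$; $((t\;[x_1.u_1,x_2.u_2])\;\varepsilon)\triangleright(t\;[x_1.(u_1\;\varepsilon),x_2.(u_2\;\varepsilon)])$; $(\mu a.t\;\varepsilon)\triangleright\mu a.t[a:=^*\varepsilon]$, where $t[a:=^*\varepsilon]$ replaces inductively each subterm $(a\;v)$ by $(a\;(v\;\varepsilon))$. $\mathcal{N}$ is the set of strongly normalizable terms (no infinite $\triangleright$-reduction sequence). For sets $K,L$ of terms define: $K\to L=\{t\in\mathcal{T} : (t\;u)\in L \text{ for all } u\in K\}$; $K\wedge L=\{t\in\mathcal{T} : (t\;\pi_1)\in K \text{ and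 } (t\;\pi_2)\in L\}$; $K\vee L=\{t\in\mathcal{T} :$ for all $\lambda$-variables $x,y$ and all $u,v\in\mathcal{N}$, if $u[x:=r]\in\mathcal{N}$ and $v[y:=s]\in\mathcal{N}$ for all $r\in K$, $s\in L$, then $(t\;[x.u,y.v])\in\mathcal{N}\}$. The set $\mathcal{R}$ of reducibility candidates is the smallest set of sets of terms containing $\mathcal{N}$ and closed under $\to$, $\wedge$, $\vee$. *)

theory Defs
  imports Main
begin

text \<open>Terms of the lambda-mu calculus with pairs and sums, represented with de Bruijn
indices (so terms are identified up to renaming of bound variables).  There are two
independent index spaces: lambda-variables (LVar i) and mu-variables (the index a in
MApp a t).  Lam binds lambda-index 0, each branch of Cse binds lambda-index 0, and
Mu binds mu-index 0.\<close>

datatype trm =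
    LVar nat
  | Lam trm
  | App trm elim
  | Pr trm trm
  | In1 trm
  | In2 trm
  | Mu trm
  | MApp nat trm
and elim =
    ETm trm
  | Pi1
  | Pi2
  | Cse trm trm

primrec liftL :: "nat \<Rightarrow> trm \<Rightarrow> trm" and liftLe :: "nat \<Rightarrow> elim \<Rightarrow> elim" where
  "liftL k (LVar i) = (if i < k then LVar i else LVar (Suc i))"
| "liftL k (Lam t) = Lam (liftL (Suc k) t)"
| "liftL k (App t e) = App (liftL k t) (liftLe k e)"
| "liftL k (Pr t u) = Pr (liftL k t) (liftL k u)"
| "liftL k (In1 t) = In1 (liftL k t)"
| "liftL k (In2 t) = In2 (liftL k t)"
| "liftL k (Mu t) = Mu (liftL k t)"
| "liftL k (MApp a t) = MApp a (liftL k t)"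
| "liftLe k (ETm t) = ETm (liftL k t)"
| "liftLe k Pi1 = Pi1"
| "liftLe k Pi2 = Pi2"
| "liftLe k (Cse u v) = Cse (liftL (Suc k) u) (liftL (Suc k) v)"

primrec liftM :: "nat \<Rightarrow> trm \<Rightarrow> trm" and liftMe :: "nat \<Rightarrow> elim \<Rightarrow> elim" where
  "liftM k (LVar i) = LVar i"
| "liftM k (Lam t) = Lam (liftM k t)"
| "liftM k (App t e) = App (liftM k t) (liftMe k e)"
| "liftM k (Pr t u) = Pr (liftM k t) (liftM k u)"
| "liftM k (In1 t) = In1 (liftM k t)"
| "liftM k (In2 t) = In2 (liftM k t)"
| "liftM k (Mu t) = Mu (liftM (Suc k) t)"
| "liftM k (MApp a t) = MApp (if a < k then a else Suc a) (liftM k t)"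
| "liftMe k (ETm t) = ETm (liftM k t)"
| "liftMe k Pi1 = Pi1"
| "liftMe k Pi2 = Pi2"
| "liftMe k (Cse u v) = Cse (liftM k u) (liftM k v)"

primrec substL :: "trm \<Rightarrow> nat \<Rightarrow> trm \<Rightarrow> trm" and substLe :: "elim \<Rightarrow> nat \<Rightarrow> trm \<Rightarrow> elim" where
  "substL (LVar i) k s = (if i < k then LVar i else if i = k then s else LVar (i - 1))"
| "substL (Lam t) k s = Lam (substL t (Suc k) (liftL 0 s))"
| "substL (App t e) k s = App (substL t k s) (substLe e k s)"
| "substL (Pr t u) k s = Pr (substL t k s) (substL u k s)"
| "substL (In1 t) k s = In1 (substL t k s)"
| "substL (In2 t) k s = In2 (substL t k s)"
| "substL (Mu t) k s = Mu (substL t k (liftM 0 s))"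
| "substL (MApp a t) k s = MApp a (substL t k s)"
| "substLe (ETm t) k s = ETm (substL t k s)"
| "substLe Pi1 k s = Pi1"
| "substLe Pi2 k s = Pi2"
| "substLe (Cse u v) k s = Cse (substL u (Suc k) (liftL 0 s)) (substL v (Suc k) (liftL 0 s))"

text \<open>mu-substitution t[a:=* e]: every subterm (a v) becomes (a (v e)), inductively.\<close>
primrec substM :: "trm \<Rightarrow> nat \<Rightarrow> elim \<Rightarrow> trm" and substMe :: "elim \<Rightarrow> nat \<Rightarrow> elim \<Rightarrow> elim" where
  "substM (LVar i) k e = LVar i"
| "substM (Lam t) k e = Lam (substM t k (liftLe 0 e))"
| "substM (App t f) k e = App (substM t k e) (substMe f k e)"
| "substM (Pr t u) k e = Pr (substM t k e) (substM u k e)"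
| "substM (In1 t) k e = In1 (substM t k e)"
| "substM (In2 t) k e = In2 (substM t k e)"
| "substM (Mu t) k e = Mu (substM t (Suc k) (liftMe 0 e))"
| "substM (MApp a t) k e =
     (if a = k then MApp a (App (substM t k e) e) else MApp a (substM t k e))"
| "substMe (ETm t) k e = ETm (substM t k e)"
| "substMe Pi1 k e = Pi1"
| "substMe Pi2 k e = Pi2"
| "substMe (Cse u v) k e = Cse (substM u k (liftLe 0 e)) (substM v k (liftLe 0 e))"

inductive red :: "trm \<Rightarrow> trm \<Rightarrow> bool" and rede :: "elim \<Rightarrow> elim \<Rightarrow> bool" where
  beta: "red (App (Lam u) (ETm v)) (substL u 0 v)"
| proj1: "red (App (Pr t1 t2) Pi1) t1"
| proj2: "red (App (Pr t1 t2) Pi2) t2"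
| case1: "red (App (In1 t) (Cse u1 u2)) (substL u1 0 t)"
| case2: "red (App (In2 t) (Cse u1 u2)) (substL u2 0 t)"
| comm: "red (App (App t (Cse u1 u2)) e)
             (App t (Cse (App u1 (liftLe 0 e)) (App u2 (liftLe 0 e))))"
| mu: "red (App (Mu t) e) (Mu (substM t 0 (liftMe 0 e)))"
| c_lam: "red t t' \<Longrightarrow> red (Lam t) (Lam t')"
| c_app1: "red t t' \<Longrightarrow> red (App t e) (App t' e)"
| c_app2: "rede e e' \<Longrightarrow> red (App t e) (App t e')"
| c_pr1: "red t t' \<Longrightarrow> red (Pr t u) (Pr t' u)"
| c_pr2: "red u u' \<Longrightarrow> red (Pr t u) (Pr t u')"
| c_in1: "red t t' \<Longrightarrow> red (In1 t) (In1 t')"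
| c_in2: "red t t' \<Longrightarrow> red (In2 t) (In2 t')"
| c_mu: "red t t' \<Longrightarrow> red (Mu t) (Mu t')"
| c_mapp: "red t t' \<Longrightarrow> red (MApp a t) (MApp a t')"
| c_etm: "red t t' \<Longrightarrow> rede (ETm t) (ETm t')"
| c_cse1: "red u u' \<Longrightarrow> rede (Cse u v) (Cse u' v)"
| c_cse2: "red v v' \<Longrightarrow> rede (Cse u v) (Cse u v')"

definition SN :: "trm set" where
  "SN = {t. \<not> (\<exists>f. f 0 = t \<and> (\<forall>n. red (f n) (f (Suc n))))}"

definition arrow :: "trm set \<Rightarrow> trm set \<Rightarrow> trm set" where
  "arrow K L = {t. \<forall>u\<in>K. App t (ETm u) \<in> L}"

definition conjS :: "trm set \<Rightarrow> trm set \<Rightarrow> trm set" where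
  "conjS K L = {t. App t Pi1 \<in> K \<and> App t Pi2 \<in> L}"

text \<open>In de Bruijn form the bound variables x, y of [x.u, y.v] are index 0 of u and v.\<close>
definition disj :: "trm set \<Rightarrow> trm set \<Rightarrow> trm set" where
  "disj K L = {t. \<forall>u v. u \<in> SN \<and> v \<in> SN \<and> (\<forall>r\<in>K. substL u 0 r \<in> SN)
                      \<and> (\<forall>s\<in>L. substL v 0 s \<in> SN) \<longrightarrow> App t (Cse u v) \<in> SN}"

inductive_set RC :: "trm set set" where
  RC_SN: "SN \<in> RC"
| RC_arrow: "K \<in> RC \<Longrightarrow> L \<in> RC \<Longrightarrow> arrow K L \<in> RC"
| RC_conj: "K \<in> RC \<Longrightarrow> L \<in> RC \<Longrightarrow> conjS K L \<in> RC"
| RC_disj: "K \<in> RC \<Longrightarrow> L \<in> RC \<Longrightarrow> disj K L \<in> RC"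

end

theory Submission
  imports Defs
begin

text \<open>Strong normalisation of a term amounts to accessibility for the converse of the
reduction relation, which gives an induction principle along reductions.  Call a
stack a term x e1 ... en in which every eliminator ei is a projection or a strongly
normalizable argument.  Since the head is a variable, no redex ever appears at the top
of a stack, even after applying a further eliminator, so reductions of t e only take
place inside t or e; hence t e is strongly normalizable whenever t is a stack and e is
strongly normalizable, whatever kind of eliminator e is.  By induction on the
construction of R one shows that R \<subseteq> SN and that R contains all stacks.  For R \<subseteq> SN,
a term t of R applied to a variable (or to the case eliminator [x.x, y.y]) lands in a
set already known to be inside SN, and then so is t.\<close>

lemma SN_iff_accp: "t \<in> SN \<longleftrightarrow> Wellfounded.accp (\<lambda>a b. red b a) t"
proof
  assume t: "t \<in> SN"
  show "Wellfounded.accp (\<lambda>a b. red b a) t"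
  proof (rule ccontr)
    assume not_acc: "\<not> Wellfounded.accp (\<lambda>a b. red b a) t"
    define next_step where "next_step s = (SOME s'. red s s' \<and> \<not> Wellfounded.accp (\<lambda>a b. red b a) s')" for s
    define f where "f n = (next_step ^^ n) t" for n
    have step: "red s (next_step s) \<and> \<not> Wellfounded.accp (\<lambda>a b. red b a) (next_step s)"
      if not_acc_s: "\<not> Wellfounded.accp (\<lambda>a b. red b a) s" for s
    proof -
      obtain z where "red s z" "\<not> Wellfounded.accp (\<lambda>a b. red b a) z"
        using not_accp_down[OF not_acc_s] by blast
      then show ?thesis
        unfolding next_step_def
        using someI[of "\<lambda>s'. red s s' \<and> \<not> Wellfounded.accp (\<lambda>a b. red b a) s'" z] by blast
    qed
    have "\<not> Wellfounded.accp (\<lambda>a b. red b a) (f n)" for n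
      by (induction n) (simp_all add: f_def not_acc step)
    then have "\<forall>n. red (f n) (f (Suc n))"
      using step by (simp add: f_def)
    moreover have "f 0 = t" by (simp add: f_def)
    ultimately show False using t unfolding SN_def by blast
  qed
next
  assume "Wellfounded.accp (\<lambda>a b. red b a) t"
  then show "t \<in> SN"
  proof (induction rule: accp_induct_rule)
    case (1 t)
    show "t \<in> SN"
    proof (rule ccontr)
      assume "t \<notin> SN"
      then obtain f where "f 0 = t" "\<forall>n. red (f n) (f (Suc n))"
        by (auto simp: SN_def)
      then have "f (Suc 0) \<in> SN" and "\<forall>n. red (f (Suc n)) (f (Suc (Suc n)))"
        using "1.IH" by metis+
      then show False unfolding SN_def by auto
    qed
  qed
qed

lemma SN_intro: "(\<And>t'. red t t' \<Longrightarrow> t' \<in> SN) \<Longrightarrow> t \<in> SN"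
  unfolding SN_iff_accp by (rule Wellfounded.accp.accI)

lemma SN_red: "t \<in> SN \<Longrightarrow> red t t' \<Longrightarrow> t' \<in> SN"
  unfolding SN_iff_accp by (rule accp_downward)

lemma SN_induct [consumes 1, case_names SN]:
  assumes "t \<in> SN"
    and "\<And>t. t \<in> SN \<Longrightarrow> (\<And>t'. red t t' \<Longrightarrow> P t') \<Longrightarrow> P t"
  shows "P t"
  using assms(1)[unfolded SN_iff_accp]
  by (induction rule: accp_induct_rule) (auto intro: assms(2) simp: SN_iff_accp)

lemma SN_AppD: "App t e \<in> SN \<Longrightarrow> t \<in> SN"
proof (induction "App t e" arbitrary: t rule: SN_induct)
  case SN
  then show ?case by (blast intro: SN_intro red_rede.c_app1)
qed

abbreviation SN_elim :: "elim \<Rightarrow> bool" where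
  "SN_elim \<equiv> Wellfounded.accp (\<lambda>e e'. rede e' e)"

inductive_cases red_LVarE: "red (LVar x) r"
inductive_cases red_AppE: "red (App t e) r"
inductive_cases rede_ETmE: "rede (ETm u) e'"
inductive_cases rede_CseE: "rede (Cse u v) e'"
inductive_cases rede_Pi1E: "rede Pi1 e'"
inductive_cases rede_Pi2E: "rede Pi2 e'"

lemma SN_elim_Pi1: "SN_elim Pi1"
  by (rule Wellfounded.accp.accI) (auto elim: rede_Pi1E)

lemma SN_elim_Pi2: "SN_elim Pi2"
  by (rule Wellfounded.accp.accI) (auto elim: rede_Pi2E)

lemma SN_elim_ETm: "u \<in> SN \<Longrightarrow> SN_elim (ETm u)"
proof (induction rule: SN_induct)
  case (SN u)
  show ?case by (rule Wellfounded.accp.accI) (auto elim: rede_ETmE intro: SN.IH)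
qed

lemma SN_elim_Cse: "u \<in> SN \<Longrightarrow> v \<in> SN \<Longrightarrow> SN_elim (Cse u v)"
proof (induction arbitrary: v rule: SN_induct)
  case (SN u)
  note IH_u = SN.IH and u_SN = SN.hyps
  from \<open>v \<in> SN\<close> show ?case
  proof (induction rule: SN_induct)
    case (SN v)
    show ?case
      by (rule Wellfounded.accp.accI) (auto elim: rede_CseE intro: IH_u SN.IH SN.hyps u_SN)
  qed
qed

text \<open>Case eliminators are excluded from stacks: a stack applied to a case eliminator can
fire the commutation rule once another eliminator is applied.\<close>
inductive stack :: "trm \<Rightarrow> bool" where
  stack_LVar: "stack (LVar x)"
| stack_ETm: "stack t \<Longrightarrow> u \<in> SN \<Longrightarrow> stack (App t (ETm u))"
| stack_Pi1: "stack t \<Longrightarrow> stack (App t Pi1)"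
| stack_Pi2: "stack t \<Longrightarrow> stack (App t Pi2)"

lemma stack_App_redE:
  assumes "stack t" "red (App t e) r"
  obtains t' where "r = App t' e" "red t t'"
  | e' where "r = App t e'" "rede e e'"
  using assms(2) by (cases rule: red_AppE) (use assms(1) in \<open>auto elim: stack.cases\<close>)

lemma stack_red: "stack t \<Longrightarrow> red t s \<Longrightarrow> stack s"
proof (induction arbitrary: s rule: stack.induct)
  case stack_LVar
  then show ?case by (auto elim: red_LVarE)
next
  case (stack_ETm t u)
  from stack_ETm.hyps(1) stack_ETm.prems show ?case
  proof (cases rule: stack_App_redE)
    case (1 t')
    then show ?thesis using stack_ETm.IH stack_ETm.hyps(2) by (simp add: stack.stack_ETm)
  next
    case (2 e')
    then show ?thesis
      using stack_ETm.hyps SN_red by (auto elim: rede_ETmE intro: stack.stack_ETm)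
  qed
next
  case (stack_Pi1 t)
  from stack_Pi1.hyps stack_Pi1.prems show ?case
    by (cases rule: stack_App_redE) (auto elim: rede_Pi1E intro: stack.intros stack_Pi1.IH)
next
  case (stack_Pi2 t)
  from stack_Pi2.hyps stack_Pi2.prems show ?case
    by (cases rule: stack_App_redE) (auto elim: rede_Pi2E intro: stack.intros stack_Pi2.IH)
qed

lemma stack_App_SN: "t \<in> SN \<Longrightarrow> stack t \<Longrightarrow> SN_elim e \<Longrightarrow> App t e \<in> SN"
proof (induction arbitrary: e rule: SN_induct)
  case (SN t)
  from \<open>SN_elim e\<close> show ?case
  proof (induction rule: accp_induct_rule)
    case (1 e)
    show ?case
    proof (rule SN_intro)
      fix r assume "red (App t e) r"
      with \<open>stack t\<close> show "r \<in> SN"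
      proof (cases rule: stack_App_redE)
        case (1 t')
        then show ?thesis
          using SN.IH stack_red[OF \<open>stack t\<close>] "1.hyps" by blast
      next
        case (2 e')
        then show ?thesis using "1.IH" by blast
      qed
    qed
  qed
qed

lemma stack_SN: "stack t \<Longrightarrow> t \<in> SN"
  by (induction rule: stack.induct)
    (auto intro: SN_intro stack_App_SN stack.intros SN_elim_ETm SN_elim_Pi1 SN_elim_Pi2
      elim: red_LVarE)

lemma RC_SN_stacks: "R \<in> RC \<Longrightarrow> R \<subseteq> SN \<and> Collect stack \<subseteq> R"
proof (induction rule: RC.induct)
  case RC_SN
  then show ?case using stack_SN by blast
next
  case (RC_arrow K L)
  have "LVar 0 \<in> K" using RC_arrow.IH(1) stack_LVar by blast
  then have "arrow K L \<subseteq> SN"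
    using RC_arrow.IH(2) by (auto simp: arrow_def intro: SN_AppD)
  moreover have "Collect stack \<subseteq> arrow K L"
    using RC_arrow.IH by (auto simp: arrow_def intro!: stack_ETm)
  ultimately show ?case ..
next
  case (RC_conj K L)
  have "conjS K L \<subseteq> SN"
    using RC_conj.IH(1) by (auto simp: conjS_def intro: SN_AppD)
  moreover have "Collect stack \<subseteq> conjS K L"
    using RC_conj.IH by (auto simp: conjS_def intro: stack_Pi1 stack_Pi2)
  ultimately show ?case ..
next
  case (RC_disj K L)
  have "LVar 0 \<in> SN" by (rule stack_SN[OF stack_LVar])
  moreover have "\<forall>r\<in>K. substL (LVar 0) 0 r \<in> SN" "\<forall>s\<in>L. substL (LVar 0) 0 s \<in> SN"
    using RC_disj.IH by auto
  ultimately have "App t (Cse (LVar 0) (LVar 0)) \<in> SN" if "t \<in> disj K L" for t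
    using that unfolding disj_def by blast
  then have "disj K L \<subseteq> SN" by (blast intro: SN_AppD)
  moreover have "Collect stack \<subseteq> disj K L"
    by (auto simp: disj_def intro: stack_App_SN stack_SN SN_elim_Cse)
  ultimately show ?case ..
qed

theorem lemma5:
  assumes "R \<in> RC"
  shows "R \<subseteq> SN \<and> (\<forall>x. LVar x \<in> R)"
  using RC_SN_stacks[OF assms] stack_LVar by blast

end
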